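(* Let $T$ be the rational map of the plane $$T(x,y)=\bigg(\frac{(1+y)(1+x-xy)^2}{(1+x)(-1-y+xy)(1+x-y^2)},\ \frac{(x-y)^2(1+x+y)}{(1+y-x^2)(1+x-y^2)}\bigg),$$ let $I(x,y)=\dfrac{(x+1)(y+1)(x+y+1)}{xy}$ and $\omega=\dfrac{1}{xy}\,dx\wedge dy$. Then, as identities of rational functions/forms (valid wherever everything is defined): (i) $I\circ T^2=I$; hence $T^2$ maps each level curve $E_r=\{I=r\}$ into itself, and these level curves form a pencil of cubic curves $(x+1)(y+1)(x+y+1)-rxy=0$; (ii) $(T^2)^*\omega=-4\,\omega$, i.e. if $J$ is the Jacobian determinant of $T^2$ at $(x,y)$ and $(\bar x,\bar y)=T^2(x,y)$, then $J(x,y)/(\bar x\bar y)=-4/(xy)$.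
   Context: Geometric meaning: every projective equivalence class of (generic) pentagons in $\mathbb{RP}^2$ has a unique representative with vertices $V_1=[0:-1:1], V_2=[1:0:0], V_3=[0:1:0], V_4=[-1:0:1], V_5=[x:y:1]$; call it $P(x,y)$, so $(x,y)$ are coordinates on the moduli space $M_5$ of projective classes of pentagons. For a polygon with vertices $V_j$ (indices mod 5), the projective normal of the edge $V_jV_{j+1}$ is the line through the point $(V_{j-1}V_{j+1})\cap(V_jV_{j+2})$ (intersection of the diagonals) and the point $(V_{j-1}V_j)\cap(V_{j+1}V_{j+2})$. The map $T$ sends the polygon to the polygon whose vertices are the intersections of consecutive projective normals; in the coordinates $(x,y)$ (after renormalizing to the form $P(\bar x,\bar y)$) it is given by the displayed formula. *)

theory Defs
  imports "HOL-Analysis.Analysis"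
begin

text \<open>The map T on the plane, in the coordinates (x,y) on the moduli space of pentagons.\<close>
definition T_map :: "real \<times> real \<Rightarrow> real \<times> real" where
  "T_map p = (let x = fst p; y = snd p in
     ((1 + y) * (1 + x - x*y)^2 / ((1 + x) * (-1 - y + x*y) * (1 + x - y^2)),
      (x - y)^2 * (1 + x + y) / ((1 + y - x^2) * (1 + x - y^2))))"

definition T_defined :: "real \<times> real \<Rightarrow> bool" where
  "T_defined p = (let x = fst p; y = snd p in
     1 + x \<noteq> 0 \<and> -1 - y + x*y \<noteq> 0 \<and> 1 + x - y^2 \<noteq> 0 \<and> 1 + y - x^2 \<noteq> 0)"

definition I_inv :: "real \<times> real \<Rightarrow> real" where
  "I_inv p = (let x = fst p; y = snd p in (x + 1) * (y + 1) * (x + y + 1) / (x * y))"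

definition det2 :: "(real \<times> real \<Rightarrow> real \<times> real) \<Rightarrow> real" where
  "det2 D = fst (D (1,0)) * snd (D (0,1)) - snd (D (1,0)) * fst (D (0,1))"

end

theory Submission
  imports Defs
begin

(* Write T = (T_num1/T_den1, T_num2/T_den2) and K = I_num = (x+1)(y+1)(x+y+1), so that I = K/(xy).
   The quotient rule gives the Jacobian determinant J of T in closed form, and with (u,v) = T(x,y)
   two polynomial identities hold: J K = 2uv and J xy = -2 K(u,v). In terms of I and the form
   omega = dx dy/(xy) they say T^*omega = (2/I) omega and (I o T) I = -1. Applying both at (x,y)
   and at (u,v) and eliminating gives I o T^2 = I, and by the chain rule the Jacobian determinant
   of T^2 is J(u,v) J(x,y) = -4ab/(xy), where (a,b) = T^2(x,y); that is (T^2)^*omega = -4 omega.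
   Keeping the identities in cleared-denominator form avoids assuming I nonzero along the orbit. *)

lemma det2_comp:
  assumes "linear A" "linear B"
  shows "det2 (A \<circ> B) = det2 A * det2 B"
proof -
  have expand: "A v = (fst v * fst (A (1, 0)) + snd v * fst (A (0, 1)),
                       fst v * snd (A (1, 0)) + snd v * snd (A (0, 1)))" for v :: "real \<times> real"
  proof -
    have "A v = A (fst v *\<^sub>R (1, 0) + snd v *\<^sub>R (0, 1))" by simp
    also have "\<dots> = fst v *\<^sub>R A (1, 0) + snd v *\<^sub>R A (0, 1)"
      by (simp only: linear_add [OF assms(1)] linear_scale [OF assms(1)])
    finally show ?thesis by (simp add: prod_eq_iff)
  qed
  show ?thesis
    unfolding det2_def comp_def expand [of "B (1, 0)"] expand [of "B (0, 1)"]
    by (simp add: algebra_simps)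
qed

lemma det2_divide_components:
  "det2 (\<lambda>h. (fst (L h) / a, snd (L h) / b)) = det2 L / (a * b)"
  by (simp add: det2_def diff_divide_distrib)

lemma has_derivative_quotient_pair:
  fixes f1 g1 f2 g2 :: "real \<times> real \<Rightarrow> real"
  assumes "(f1 has_derivative F1) (at p)" "(g1 has_derivative G1) (at p)"
    and "(f2 has_derivative F2) (at p)" "(g2 has_derivative G2) (at p)"
    and "g1 p \<noteq> 0" "g2 p \<noteq> 0"
  shows "((\<lambda>q. (f1 q / g1 q, f2 q / g2 q)) has_derivative
           (\<lambda>h. ((F1 h * g1 p - f1 p * G1 h) / (g1 p)^2,
                 (F2 h * g2 p - f2 p * G2 h) / (g2 p)^2))) (at p)"
  using has_derivative_Pair [OF has_derivative_divide' [OF assms(1,2,5)]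
                                has_derivative_divide' [OF assms(3,4,6)]]
  by (simp add: power2_eq_square)

definition I_num :: "real \<times> real \<Rightarrow> real" where
  "I_num p = (fst p + 1) * (snd p + 1) * (fst p + snd p + 1)"

lemma I_inv_eq_I_num: "I_inv p = I_num p / (fst p * snd p)"
  by (simp add: I_inv_def I_num_def Let_def)

lemma I_num_divide:
  fixes a b c d :: real
  assumes "b \<noteq> 0" "d \<noteq> 0"
  shows "I_num (a / b, c / d) = (b + a) * (d + c) * (b * d + a * d + c * b) / (b^2 * d^2)"
  using assms by (simp add: I_num_def field_simps power2_eq_square)

definition T_num1 :: "real \<times> real \<Rightarrow> real" where
  "T_num1 = (\<lambda>(x, y). (1 + y) * (1 + x - x*y)^2)"

definition T_den1 :: "real \<times> real \<Rightarrow> real" where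
  "T_den1 = (\<lambda>(x, y). (1 + x) * (-1 - y + x*y) * (1 + x - y^2))"

definition T_num2 :: "real \<times> real \<Rightarrow> real" where
  "T_num2 = (\<lambda>(x, y). (x - y)^2 * (1 + x + y))"

definition T_den2 :: "real \<times> real \<Rightarrow> real" where
  "T_den2 = (\<lambda>(x, y). (1 + y - x^2) * (1 + x - y^2))"

lemma T_map_eq_quotients: "T_map p = (T_num1 p / T_den1 p, T_num2 p / T_den2 p)"
  by (simp add: T_map_def Let_def T_num1_def T_den1_def T_num2_def T_den2_def case_prod_beta)

lemma T_defined_iff: "T_defined p \<longleftrightarrow> T_den1 p \<noteq> 0 \<and> T_den2 p \<noteq> 0"
  by (auto simp: T_defined_def T_den1_def T_den2_def case_prod_beta)

definition T_jacobian :: "real \<times> real \<Rightarrow> real" where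
  "T_jacobian = (\<lambda>(x, y). 2 * (x - y)^2 * (1 + x - x*y)^2
     / ((1 + x)^2 * (-1 - y + x*y) * (1 + x - y^2)^2 * (1 + y - x^2)))"

definition T_jacobian_num :: "real \<times> real \<Rightarrow> real" where
  "T_jacobian_num = (\<lambda>(x, y). 2 * (x - y)^2 * (1 + x - x*y)^2
     * ((-1 - y + x*y) * (1 + x - y^2)^2 * (1 + y - x^2)))"

lemma T_jacobian_eq_quotient:
  assumes "T_defined p"
  shows "T_jacobian p = T_jacobian_num p / ((T_den1 p)^2 * (T_den2 p)^2)"
proof -
  obtain x y where p: "p = (x, y)" by fastforce
  have "(T_den1 p)^2 * (T_den2 p)^2
      = ((1 + x)^2 * (-1 - y + x*y) * (1 + x - y^2)^2 * (1 + y - x^2))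
        * ((-1 - y + x*y) * (1 + x - y^2)^2 * (1 + y - x^2))"
    unfolding p T_den1_def T_den2_def by simp algebra
  with assms show ?thesis
    by (simp add: p T_defined_def T_jacobian_def T_jacobian_num_def)
qed

lemma T_map_has_derivative:
  assumes "T_defined (x, y)"
  shows "\<exists>D. (T_map has_derivative D) (at (x, y)) \<and> det2 D = T_jacobian (x, y)"
proof -
  define num1' where "num1' h = 2 * (1 - y^2) * (1 + x - x*y) * fst h
      + (1 + x - x*y) * (1 - x - 3*x*y) * snd h" for h :: "real \<times> real"
  define den1' where "den1' h = ((-1 - y + x*y) * (1 + x - y^2) + (1 + x) * y * (1 + x - y^2)
        + (1 + x) * (-1 - y + x*y)) * fst h
      + ((1 + x) * (x - 1) * (1 + x - y^2) - 2 * y * (1 + x) * (-1 - y + x*y)) * snd h"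
    for h :: "real \<times> real"
  define num2' where "num2' h = (x - y) * (2 + 3*x + y) * fst h - (x - y) * (2 + x + 3*y) * snd h"
    for h :: "real \<times> real"
  define den2' where "den2' h = ((1 + y - x^2) - 2 * x * (1 + x - y^2)) * fst h
      + ((1 + x - y^2) - 2 * y * (1 + y - x^2)) * snd h" for h :: "real \<times> real"
  have d_num1: "(T_num1 has_derivative num1') (at (x, y))"
    unfolding T_num1_def num1'_def case_prod_beta
    by (auto intro!: derivative_eq_intros simp: fun_eq_iff algebra_simps power2_eq_square)
  have d_den1: "(T_den1 has_derivative den1') (at (x, y))"
    unfolding T_den1_def den1'_def case_prod_beta
    by (auto intro!: derivative_eq_intros simp: fun_eq_iff algebra_simps power2_eq_square)
  have d_num2: "(T_num2 has_derivative num2') (at (x, y))"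
    unfolding T_num2_def num2'_def case_prod_beta
    by (auto intro!: derivative_eq_intros simp: fun_eq_iff algebra_simps power2_eq_square)
  have d_den2: "(T_den2 has_derivative den2') (at (x, y))"
    unfolding T_den2_def den2'_def case_prod_beta
    by (auto intro!: derivative_eq_intros simp: fun_eq_iff algebra_simps power2_eq_square)
  have den: "T_den1 (x, y) \<noteq> 0" "T_den2 (x, y) \<noteq> 0"
    using assms by (simp_all add: T_defined_iff)
  define L where "L h = (num1' h * T_den1 (x, y) - T_num1 (x, y) * den1' h,
                         num2' h * T_den2 (x, y) - T_num2 (x, y) * den2' h)" for h
  have "(T_map has_derivative
          (\<lambda>h. (fst (L h) / (T_den1 (x, y))^2, snd (L h) / (T_den2 (x, y))^2))) (at (x, y))"
    using has_derivative_quotient_pair [OF d_num1 d_den1 d_num2 d_den2 den]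
    by (simp add: L_def T_map_eq_quotients [abs_def])
  moreover have "det2 L = T_jacobian_num (x, y)"
    unfolding det2_def L_def T_num1_def T_den1_def T_num2_def T_den2_def T_jacobian_num_def
      num1'_def den1'_def num2'_def den2'_def
    by simp algebra
  ultimately show ?thesis
    using assms by (auto simp: det2_divide_components T_jacobian_eq_quotient)
qed

lemma T_jacobian_num_mult_I_num:
  "T_jacobian_num p * I_num p = 2 * T_num1 p * T_num2 p * T_den1 p * T_den2 p"
  unfolding I_num_def T_num1_def T_den1_def T_num2_def T_den2_def T_jacobian_num_def case_prod_beta
  by algebra

lemma T_jacobian_num_mult_xy:
  "T_jacobian_num p * (fst p * snd p) = -2 * ((T_den1 p + T_num1 p) * (T_den2 p + T_num2 p)
     * (T_den1 p * T_den2 p + T_num1 p * T_den2 p + T_num2 p * T_den1 p))"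
  unfolding T_num1_def T_den1_def T_num2_def T_den2_def T_jacobian_num_def case_prod_beta
  by algebra

lemma T_jacobian_mult_I_num:
  assumes "T_defined p"
  shows "T_jacobian p * I_num p = 2 * fst (T_map p) * snd (T_map p)"
proof -
  have den: "T_den1 p \<noteq> 0" "T_den2 p \<noteq> 0"
    using assms by (simp_all add: T_defined_iff)
  have "T_jacobian p * I_num p = T_jacobian_num p * I_num p / ((T_den1 p)^2 * (T_den2 p)^2)"
    using assms by (simp add: T_jacobian_eq_quotient)
  also have "\<dots> = 2 * T_num1 p * T_num2 p * T_den1 p * T_den2 p / ((T_den1 p)^2 * (T_den2 p)^2)"
    by (simp only: T_jacobian_num_mult_I_num)
  also have "\<dots> = 2 * (T_num1 p / T_den1 p) * (T_num2 p / T_den2 p)"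
    using den by (simp add: field_simps power2_eq_square)
  finally show ?thesis
    by (simp add: T_map_eq_quotients)
qed

lemma T_jacobian_mult_xy:
  assumes "T_defined p"
  shows "T_jacobian p * (fst p * snd p) = -2 * I_num (T_map p)"
proof -
  have den: "T_den1 p \<noteq> 0" "T_den2 p \<noteq> 0"
    using assms by (simp_all add: T_defined_iff)
  have "T_jacobian p * (fst p * snd p)
      = T_jacobian_num p * (fst p * snd p) / ((T_den1 p)^2 * (T_den2 p)^2)"
    using assms by (simp add: T_jacobian_eq_quotient)
  also have "\<dots> = -2 * I_num (T_num1 p / T_den1 p, T_num2 p / T_den2 p)"
    using den by (simp add: T_jacobian_num_mult_xy I_num_divide)
  finally show ?thesis
    by (simp add: T_map_eq_quotients)
qed

theorem theorem1:
  fixes x y :: real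
  assumes "T_defined (x, y)" and "T_defined (T_map (x, y))"
    and "x * y \<noteq> 0"
    and "fst (T_map (T_map (x, y))) * snd (T_map (T_map (x, y))) \<noteq> 0"
  shows "I_inv (T_map (T_map (x, y))) = I_inv (x, y)
     \<and> (\<exists>D. ((T_map \<circ> T_map) has_derivative D) (at (x, y))
          \<and> det2 D / (fst (T_map (T_map (x, y))) * snd (T_map (T_map (x, y)))) = -4 / (x * y))"
proof -
  obtain u v where uv: "T_map (x, y) = (u, v)" by fastforce
  obtain a b where ab: "T_map (u, v) = (a, b)" by fastforce
  have defined: "T_defined (u, v)" using assms(2) uv by simp
  obtain D1 where D1: "(T_map has_derivative D1) (at (x, y))" "det2 D1 = T_jacobian (x, y)"
    using T_map_has_derivative [OF assms(1)] by blast
  obtain D2 where D2: "(T_map has_derivative D2) (at (u, v))" "det2 D2 = T_jacobian (u, v)"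
    using T_map_has_derivative [OF defined] by blast
  have chain: "((T_map \<circ> T_map) has_derivative D2 \<circ> D1) (at (x, y))"
    using diff_chain_at [OF D1(1)] D2(1) uv by simp
  have "det2 (D2 \<circ> D1) = T_jacobian (u, v) * T_jacobian (x, y)"
    using det2_comp D1 D2 has_derivative_linear by metis
  moreover have "T_jacobian (u, v) * T_jacobian (x, y) * (x * y) = -4 * (a * b)"
    and "I_num (a, b) * (x * y) = I_num (x, y) * (a * b)"
    using T_jacobian_mult_I_num [OF assms(1)] T_jacobian_mult_xy [OF assms(1)]
      T_jacobian_mult_I_num [OF defined] T_jacobian_mult_xy [OF defined]
    by (simp_all add: uv ab) algebra+
  ultimately show ?thesis
    using chain assms(3,4) uv ab by (auto simp: I_inv_eq_I_num field_simps)
qed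

end
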